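(* Let $G$ be a finite group with $|G|\ge 3$. (1) For every subset $G_0\subset G$, the inclusion $\mathcal B(G_0)\subset\mathcal F(G_0)$ is cofinal and $\mathcal B(G_0)$ is a C-monoid. (2) $\mathsf v_g(\mathcal B(G))=\mathbb N_0$ for all $g\in G$; the embedding $\widehat{\mathcal B(G)}\hookrightarrow\mathcal F(G)$ is a divisor theory, and the map $\Phi:\mathsf q(\mathcal F(G))/\mathsf q(\mathcal B(G))\to G/G'$, $S\,\mathsf q(\mathcal B(G))\mapsto gG'$ for $S\in\mathcal F(G)$ and $g\in\pi(S)$, is a well-defined group isomorphism; here $\mathsf q(\mathcal F(G))/\mathsf q(\mathcal B(G))$ is the class group of the Krull monoid $\widehat{\mathcal B(G)}$. (3) There is a semigroup epimorphism from the class semigroup $\mathcal C(\mathcal B(G),\mathcal F(G))$ onto $G/G'$.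
   Context: Let $G$ be a finite group written multiplicatively with identity $1_G$, and $G'$ its commutator subgroup. For $G_0\subset G$, $\mathcal F(G_0)$ is the free abelian monoid with basis $G_0$ (sequences $S=g_1\boldsymbol{\cdot}\ldots\boldsymbol{\cdot}g_\ell$, operation $\boldsymbol{\cdot}$), $\mathsf v_g(S)$ is the multiplicity of $g$ in $S$, $\pi(S)=\{g_{\tau(1)}\cdots g_{\tau(\ell)}:\tau\text{ a permutation}\}$ ($\pi$ of the empty sequence is $\{1_G\}$), and $\mathcal B(G_0)=\{S\in\mathcal F(G_0):1_G\in\pi(S)\}$. For a monoid $H$, $\mathsf q(H)$ is its quotient group and $\widehat H=\{x\in\mathsf q(H):\exists c\in H\ \forall n\in\mathbb N:\ cx^n\in H\}$ its complete integral closure. A submonoid $H\subset F$ is cofinal if every $\alpha\in F$ divides some element of $H$ in $F$. A homomorphism $\varphi:H\to D$ is a divisor theory if $D$ is free abelian, $\varphi(a)\mid\varphi(b)$ implies $a\mid b$, and every $\alpha\in D$ is the gcd of finitely many elements of $\varphi(H)$. For a submonoid $H$ of a monoid $F$, $y,y'\in F$ are $H$-equivalent if $y^{-1}H\cap F=y'^{-1}H\cap F$; this is a congruence, the set of classes $\mathcal C(H,F)$ is the class semigroup, and $\mathcal C^*(H,F)$ is the subsemigroup of classes of elements of $(F\setminus F^\times)\cup\{1\}$. $H$ is a C-monoid if it is a submonoid of a factorial monoid $F$ with $H\cap F^\times=H^\times$ and $\mathcal C^*(H,F)$ finite. *)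

theory Defs
  imports "HOL-Algebra.Algebra" "HOL-Library.Multiset"
begin

text \<open>F(G0): the free abelian monoid over G0, modelled as finite multisets with support in G0.\<close>
definition seqs :: "'a set \<Rightarrow> 'a multiset set" where
  "seqs G0 = {S. set_mset S \<subseteq> G0}"

text \<open>pi(S): products of S over all orderings (the empty product is the identity).\<close>
definition prods :: "('a, 'b) monoid_scheme \<Rightarrow> 'a multiset \<Rightarrow> 'a set" where
  "prods G S = {foldr (\<otimes>\<^bsub>G\<^esub>) xs \<one>\<^bsub>G\<^esub> | xs. mset xs = S}"

text \<open>B(G0): product-one sequences over G0.\<close>
definition zss :: "('a, 'b) monoid_scheme \<Rightarrow> 'a set \<Rightarrow> 'a multiset set" where
  "zss G G0 = {S \<in> seqs G0. \<one>\<^bsub>G\<^esub> \<in> prods G S}"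

definition msmon :: "'a multiset set \<Rightarrow> 'a multiset monoid" where
  "msmon M = \<lparr>carrier = M, monoid.mult = (+), one = (0::'a multiset)\<rparr>"

definition cofinal :: "'a set \<Rightarrow> ('a, 'b) monoid_scheme \<Rightarrow> bool" where
  "cofinal H F \<longleftrightarrow> (\<forall>\<alpha>\<in>carrier F. \<exists>h\<in>H. \<alpha> divides\<^bsub>F\<^esub> h)"

definition H_equiv :: "'a set \<Rightarrow> ('a, 'b) monoid_scheme \<Rightarrow> 'a \<Rightarrow> 'a \<Rightarrow> bool" where
  "H_equiv H F y y' \<longleftrightarrow>
     {x \<in> carrier F. y \<otimes>\<^bsub>F\<^esub> x \<in> H} = {x \<in> carrier F. y' \<otimes>\<^bsub>F\<^esub> x \<in> H}"

definition H_class :: "'a set \<Rightarrow> ('a, 'b) monoid_scheme \<Rightarrow> 'a \<Rightarrow> 'a set" where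
  "H_class H F y = {y' \<in> carrier F. H_equiv H F y y'}"

text \<open>The class semigroup C(H,F) with the induced operation [y][y'] = [y y'].\<close>
definition class_semigroup :: "'a set \<Rightarrow> ('a, 'b) monoid_scheme \<Rightarrow> 'a set monoid" where
  "class_semigroup H F =
     \<lparr>carrier = H_class H F ` carrier F,
      monoid.mult = (\<lambda>A B. H_class H F ((SOME a. a \<in> A) \<otimes>\<^bsub>F\<^esub> (SOME b. b \<in> B))),
      one = H_class H F \<one>\<^bsub>F\<^esub>\<rparr>"

definition class_star :: "'a set \<Rightarrow> ('a, 'b) monoid_scheme \<Rightarrow> 'a set set" where
  "class_star H F = H_class H F ` ((carrier F - Units F) \<union> {\<one>\<^bsub>F\<^esub>})"

text \<open>C-monoid: H is a submonoid of a factorial monoid F with H \<inter> F^\<times> = H^\<times>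
  and C*(H,F) finite.  (F ranges over monoids on the element type of H.)\<close>
definition C_monoid :: "('a, 'b) monoid_scheme \<Rightarrow> bool" where
  "C_monoid H \<longleftrightarrow> (\<exists>F :: 'a monoid.
     factorial_monoid F \<and> carrier H \<subseteq> carrier F \<and> \<one>\<^bsub>H\<^esub> = \<one>\<^bsub>F\<^esub> \<and>
     (\<forall>a\<in>carrier H. \<forall>b\<in>carrier H. a \<otimes>\<^bsub>H\<^esub> b = a \<otimes>\<^bsub>F\<^esub> b) \<and>
     carrier H \<inter> Units F = Units H \<and>
     finite (class_star (carrier H) F))"

definition free_abelian :: "('a, 'b) monoid_scheme \<Rightarrow> bool" where
  "free_abelian D \<longleftrightarrow> (\<exists>(P :: 'a set) (f :: 'a multiset \<Rightarrow> 'a).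
     bij_betw f {m. set_mset m \<subseteq> P} (carrier D) \<and> f {#} = \<one>\<^bsub>D\<^esub> \<and>
     (\<forall>m n. set_mset m \<subseteq> P \<longrightarrow> set_mset n \<subseteq> P \<longrightarrow> f (m + n) = f m \<otimes>\<^bsub>D\<^esub> f n))"

definition is_gcd_set :: "('a, 'b) monoid_scheme \<Rightarrow> 'a \<Rightarrow> 'a set \<Rightarrow> bool" where
  "is_gcd_set D \<alpha> A \<longleftrightarrow> \<alpha> \<in> carrier D \<and> (\<forall>a\<in>A. \<alpha> divides\<^bsub>D\<^esub> a) \<and>
     (\<forall>\<delta>\<in>carrier D. (\<forall>a\<in>A. \<delta> divides\<^bsub>D\<^esub> a) \<longrightarrow> \<delta> divides\<^bsub>D\<^esub> \<alpha>)"

definition divisor_theory ::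
  "('a, 'c) monoid_scheme \<Rightarrow> ('b, 'd) monoid_scheme \<Rightarrow> ('a \<Rightarrow> 'b) \<Rightarrow> bool" where
  "divisor_theory H D \<phi> \<longleftrightarrow>
     \<phi> \<in> hom H D \<and> \<phi> \<one>\<^bsub>H\<^esub> = \<one>\<^bsub>D\<^esub> \<and> free_abelian D \<and>
     (\<forall>a\<in>carrier H. \<forall>b\<in>carrier H. \<phi> a divides\<^bsub>D\<^esub> \<phi> b \<longrightarrow> a divides\<^bsub>H\<^esub> b) \<and>
     (\<forall>\<alpha>\<in>carrier D. \<exists>A. finite A \<and> A \<subseteq> \<phi> ` carrier H \<and> is_gcd_set D \<alpha> A)"

text \<open>Submonoids of F(G) are embedded into q(F(G)) = the free abelian group on G,
  modelled as integer-valued functions (a multiset S maps to its multiplicity function).\<close>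
definition vec :: "'a multiset \<Rightarrow> ('a \<Rightarrow> int)" where
  "vec S = (\<lambda>g. int (count S g))"

text \<open>q(H) for a submonoid H of q(F(G)): the subgroup generated, i.e. all differences.\<close>
definition qgrp :: "('a \<Rightarrow> int) set \<Rightarrow> ('a \<Rightarrow> int) set" where
  "qgrp M = {(\<lambda>g. x g - y g) | x y. x \<in> M \<and> y \<in> M}"

text \<open>Complete integral closure: x \<in> q(H) with c x^n \<in> H for some c \<in> H and all n \<in> \<nat> = {1,2,...}.\<close>
definition cic :: "('a \<Rightarrow> int) set \<Rightarrow> ('a \<Rightarrow> int) set" where
  "cic M = {x \<in> qgrp M. \<exists>c\<in>M. \<forall>n::nat. n \<ge> 1 \<longrightarrow> (\<lambda>g. c g + int n * x g) \<in> M}"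

definition vmon :: "('a \<Rightarrow> int) set \<Rightarrow> ('a \<Rightarrow> int) monoid" where
  "vmon M = \<lparr>carrier = M, monoid.mult = (\<lambda>a b g. a g + b g), one = (\<lambda>g. 0::int)\<rparr>"

definition Phi :: "('a, 'b) monoid_scheme \<Rightarrow> ('a \<Rightarrow> int) set \<Rightarrow> 'a set" where
  "Phi G C = derived G (carrier G) #>\<^bsub>G\<^esub>
     (SOME g. \<exists>S\<in>seqs (carrier G). C = qgrp (vec ` zss G (carrier G)) #>\<^bsub>vmon (qgrp (vec ` seqs (carrier G)))\<^esub> vec S
                \<and> g \<in> prods G S)"

end

theory Submission
  imports Defs
begin

(* B(G0) is cofinal in F(G0) because S^|G| is a product-one multiple of S.  For the C-monoid
   property, a pigeonhole argument on partial products shows that a product-one sequence containing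
   some g at least |G|^2 times stays product-one after removing |G| copies of g.  Hence every
   sequence is H-equivalent to one with all multiplicities below |G|^2, and there are only finitely
   many of these.

   Since G/G' is abelian,
   all products of a sequence S lie in a single coset G' p(S).  Every commutator a b a^-1 b^-1 is a
   product of a product-one sequence, so one product-one sequence C has all of G' among its products,
   and then S C is product-one whenever p(S) lies in G'.  Consequently vec S - vec T lies in q(B(G))
   exactly when G' p(S) = G' p(T).  This gives the isomorphism Phi, identifies the complete integral
   closure with q(B(G)) intersected with F(G) (a divisor theory: S is the gcd of the product-one
   sequences S t and S a b, where t = p(S)^-1 = a b and t is neither a nor b), and, as H-equivalent
   sequences have the same coset, the epimorphism from the class semigroup. *)

section \<open>Sequences and H-equivalence\<close>

lemma seqs_add [simp]: "S + T \<in> seqs A \<longleftrightarrow> S \<in> seqs A \<and> T \<in> seqs A"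
  by (auto simp: seqs_def)

lemma seqs_empty [simp]: "{#} \<in> seqs A"
  by (simp add: seqs_def)

lemma seqs_mono: "A \<subseteq> B \<Longrightarrow> S \<in> seqs A \<Longrightarrow> S \<in> seqs B"
  by (auto simp: seqs_def)

lemma repeat_mset_in_seqs: "S \<in> seqs A \<Longrightarrow> repeat_mset n S \<in> seqs A"
  unfolding seqs_def by (metis count_eq_zero_iff count_repeat_mset mem_Collect_eq mult_0_right subset_iff)

lemma diff_in_seqs: "S \<in> seqs A \<Longrightarrow> S - T \<in> seqs A"
  by (auto simp: seqs_def dest: in_diffD)

lemma msmon_simps [simp]:
  "carrier (msmon M) = M" "x \<otimes>\<^bsub>msmon M\<^esub> y = x + y" "\<one>\<^bsub>msmon M\<^esub> = {#}"
  by (simp_all add: msmon_def)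

lemma add_mset_in_seqs [simp]: "add_mset a S \<in> seqs A \<longleftrightarrow> a \<in> A \<and> S \<in> seqs A"
  by (auto simp: seqs_def)

lemma subset_mset_add_disjoint:
  assumes "U \<subseteq># S + M" "U \<subseteq># S + N" "M \<inter># N = {#}"
  shows "U \<subseteq># S"
proof -
  have "count M x = 0 \<or> count N x = 0" for x
    using assms(3) by (metis count_empty count_inter_mset min_def)
  moreover have "count U x \<le> count S x + count M x" "count U x \<le> count S x + count N x" for x
    using assms(1,2) by (auto simp: subseteq_mset_def)
  ultimately show ?thesis
    unfolding subseteq_mset_def by (metis add.right_neutral)
qed

lemma finite_bounded_multisets:
  assumes "finite A"
  shows "finite {M \<in> seqs A. \<forall>a. count M a < n}"
proof -
  have "size M \<le> size (repeat_mset n (mset_set A))" if "M \<in> seqs A" "\<forall>a. count M a < n" for M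
  proof (rule size_mset_mono)
    show "M \<subseteq># repeat_mset n (mset_set A)"
      using that assms by (auto simp: subseteq_mset_def seqs_def count_mset_set' less_imp_le
          simp flip: count_eq_zero_iff)
  qed
  then have "{M \<in> seqs A. \<forall>a. count M a < n}
      \<subseteq> (\<Union>m\<in>{..size (repeat_mset n (mset_set A))}. multisets_of_size A m)"
    by (auto simp: multisets_of_size_def seqs_def)
  moreover have "finite (\<Union>m\<in>{..size (repeat_mset n (mset_set A))}. multisets_of_size A m)"
    using assms by blast
  ultimately show ?thesis
    by (rule finite_subset)
qed

lemma H_equiv_refl: "H_equiv H F y y"
  and H_equiv_trans: "H_equiv H F y y' \<Longrightarrow> H_equiv H F y' y'' \<Longrightarrow> H_equiv H F y y''"
  by (simp_all add: H_equiv_def)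

lemma H_class_eq: "H_equiv H F y y' \<Longrightarrow> H_class H F y = H_class H F y'"
  by (auto simp: H_class_def H_equiv_def)

lemma self_in_H_class: "y \<in> carrier F \<Longrightarrow> y \<in> H_class H F y"
  by (simp add: H_class_def H_equiv_refl)

lemma ex_mem_other_than_two:
  assumes "3 \<le> card A"
  shows "\<exists>x\<in>A. x \<noteq> a \<and> x \<noteq> b"
proof (rule ccontr)
  assume "\<not> ?thesis"
  then have "card A \<le> card {a, b}"
    by (intro card_mono) auto
  also have "\<dots> \<le> 2"
    by (simp add: card_insert_if)
  finally show False
    using assms by simp
qed

section \<open>The free abelian monoid of sequences is factorial\<close>

lemma msmon_seqs_comm_monoid_cancel: "comm_monoid_cancel (msmon (seqs A))"
  by (intro comm_monoid_cancelI comm_monoidI) (auto simp: add_ac)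

lemma msmon_seqs_divides_iff:
  "S \<in> seqs A \<Longrightarrow> T \<in> seqs A \<Longrightarrow> S divides\<^bsub>msmon (seqs A)\<^esub> T \<longleftrightarrow> S \<subseteq># T"
  by (auto simp: factor_def subset_mset.le_iff_add)

lemma Units_msmon: "Units (msmon M) = M \<inter> {{#}}"
  by (auto simp: Units_def)

lemma factorial_monoid_msmon_seqs: "factorial_monoid (msmon (seqs A))"
proof -
  interpret comm_monoid_cancel "msmon (seqs A)"
    by (rule msmon_seqs_comm_monoid_cancel)
  have "divisor_chain_condition_monoid (msmon (seqs A))"
  proof unfold_locales
    have "{(x, y). x \<in> seqs A \<and> y \<in> seqs A \<and> properfactor (msmon (seqs A)) x y} \<subseteq> measure size"
      by (auto simp: properfactor_def msmon_seqs_divides_iff subset_mset.less_le_not_le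
          intro!: mset_subset_size)
    then show "wf {(x, y). x \<in> carrier (msmon (seqs A)) \<and> y \<in> carrier (msmon (seqs A)) \<and>
        properfactor (msmon (seqs A)) x y}"
      unfolding msmon_simps by (rule wf_subset[OF wf_measure])
  qed
  moreover have "primeness_condition_monoid (msmon (seqs A))"
  proof unfold_locales
    fix a
    assume a: "a \<in> carrier (msmon (seqs A))" "irreducible (msmon (seqs A)) a"
    then obtain x where x: "x \<in># a"
      by (auto simp: irreducible_def Units_msmon)
    have x_seqs: "{#x#} \<in> seqs A"
      using a(1) x by (auto simp: seqs_def)
    have "a = {#x#}"
    proof (rule ccontr)
      assume "a \<noteq> {#x#}"
      then have "{#x#} \<subset># a"
        using x by (simp add: subset_mset.less_le)
      then have "properfactor (msmon (seqs A)) {#x#} a"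
        using a(1) x_seqs
        by (auto simp: properfactor_def msmon_seqs_divides_iff subset_mset.less_le_not_le)
      then show False
        using a x_seqs by (auto simp: irreducible_def Units_msmon)
    qed
    then show "prime (msmon (seqs A)) a"
      using x_seqs by (auto simp: prime_def Units_msmon msmon_seqs_divides_iff)
  qed
  ultimately show ?thesis
    using factorial_condition_one by blast
qed

section \<open>Quotient groups of submonoids of the free abelian monoid\<close>

lemma vec_add: "vec (S + T) = (\<lambda>g. vec S g + vec T g)"
  by (simp add: vec_def fun_eq_iff)

lemma vec_empty: "vec {#} = (\<lambda>g. 0)"
  by (simp add: vec_def fun_eq_iff)

lemma vec_repeat_mset: "vec (repeat_mset n S) = (\<lambda>g. int n * vec S g)"
  by (simp add: vec_def fun_eq_iff)

lemma vec_nonneg: "0 \<le> vec S g"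
  by (simp add: vec_def)

lemma inj_vec: "inj vec"
  by (rule injI) (simp add: vec_def fun_eq_iff multiset_eq_iff)

lemma vec_diff:
  assumes "\<And>g. vec T g \<le> vec S g"
  shows "vec (S - T) = (\<lambda>g. vec S g - vec T g)"
  using assms by (simp add: vec_def fun_eq_iff)

lemma vmon_simps [simp]:
  "carrier (vmon K) = K" "x \<otimes>\<^bsub>vmon K\<^esub> y = (\<lambda>g. x g + y g)" "\<one>\<^bsub>vmon K\<^esub> = (\<lambda>g. 0)"
  by (simp_all add: vmon_def)

lemma mem_qgrp_iff: "x \<in> qgrp K \<longleftrightarrow> (\<exists>a\<in>K. \<exists>b\<in>K. x = (\<lambda>g. a g - b g))"
  by (auto simp: qgrp_def)

lemma qgrp_mono: "K \<subseteq> L \<Longrightarrow> qgrp K \<subseteq> qgrp L"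
  by (auto simp: qgrp_def)

lemma diff_in_qgrp: "a \<in> K \<Longrightarrow> b \<in> K \<Longrightarrow> (\<lambda>g. a g - b g) \<in> qgrp K"
  by (auto simp: qgrp_def)

locale add_submonoid =
  fixes K :: "('a \<Rightarrow> int) set"
  assumes add_closed: "a \<in> K \<Longrightarrow> b \<in> K \<Longrightarrow> (\<lambda>g. a g + b g) \<in> K"
    and zero_closed: "(\<lambda>g. 0) \<in> K"
begin

lemma subset_qgrp: "K \<subseteq> qgrp K"
proof
  fix a
  assume "a \<in> K"
  then have "(\<lambda>g. a g - 0) \<in> qgrp K"
    using diff_in_qgrp zero_closed by blast
  then show "a \<in> qgrp K"
    by simp
qed

lemma zero_in_qgrp: "(\<lambda>g. 0) \<in> qgrp K"
  using subset_qgrp zero_closed by blast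

lemma qgrp_add:
  assumes "x \<in> qgrp K" "y \<in> qgrp K"
  shows "(\<lambda>g. x g + y g) \<in> qgrp K"
proof -
  obtain a b c d where "a \<in> K" "b \<in> K" "x = (\<lambda>g. a g - b g)" "c \<in> K" "d \<in> K" "y = (\<lambda>g. c g - d g)"
    using assms unfolding mem_qgrp_iff by blast
  then have "(\<lambda>g. x g + y g) = (\<lambda>g. (\<lambda>g. a g + c g) g - (\<lambda>g. b g + d g) g)"
    "(\<lambda>g. a g + c g) \<in> K" "(\<lambda>g. b g + d g) \<in> K"
    by (auto simp: add_closed)
  then show ?thesis
    using diff_in_qgrp by metis
qed

lemma qgrp_uminus:
  assumes "x \<in> qgrp K"
  shows "(\<lambda>g. - x g) \<in> qgrp K"
proof -
  obtain a b where "a \<in> K" "b \<in> K" "x = (\<lambda>g. a g - b g)"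
    using assms unfolding mem_qgrp_iff by blast
  then have "(\<lambda>g. - x g) = (\<lambda>g. b g - a g)" "a \<in> K" "b \<in> K"
    by auto
  then show ?thesis
    using diff_in_qgrp by metis
qed

lemma qgrp_diff: "x \<in> qgrp K \<Longrightarrow> y \<in> qgrp K \<Longrightarrow> (\<lambda>g. x g - y g) \<in> qgrp K"
  using qgrp_add[OF _ qgrp_uminus] by simp

lemma qgrp_qgrp: "qgrp (qgrp K) = qgrp K"
proof
  show "qgrp (qgrp K) \<subseteq> qgrp K"
  proof
    fix x
    assume "x \<in> qgrp (qgrp K)"
    then obtain a b where "a \<in> qgrp K" "b \<in> qgrp K" "x = (\<lambda>g. a g - b g)"
      unfolding mem_qgrp_iff[of x "qgrp K"] by blast
    then show "x \<in> qgrp K"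
      using qgrp_diff by simp
  qed
  show "qgrp K \<subseteq> qgrp (qgrp K)"
  proof
    fix x
    assume "x \<in> qgrp K"
    then have "(\<lambda>g. x g - 0) \<in> qgrp (qgrp K)"
      using zero_in_qgrp by (rule diff_in_qgrp)
    then show "x \<in> qgrp (qgrp K)"
      by simp
  qed
qed

lemma comm_group_vmon_qgrp: "comm_group (vmon (qgrp K))"
proof (rule comm_groupI)
  fix x
  assume "x \<in> carrier (vmon (qgrp K))"
  then show "\<exists>y\<in>carrier (vmon (qgrp K)). y \<otimes>\<^bsub>vmon (qgrp K)\<^esub> x = \<one>\<^bsub>vmon (qgrp K)\<^esub>"
    using qgrp_uminus by (intro bexI[of _ "\<lambda>g. - x g"]) auto
qed (simp_all add: qgrp_add zero_in_qgrp add_ac)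

lemma inv_vmon_qgrp:
  assumes "x \<in> qgrp K"
  shows "inv\<^bsub>vmon (qgrp K)\<^esub> x = (\<lambda>g. - x g)"
proof -
  interpret group "vmon (qgrp K)"
    using comm_group_vmon_qgrp comm_group.axioms(2) by blast
  show ?thesis
    using assms qgrp_uminus by (intro inv_equality) simp_all
qed

end

lemma subgroup_qgrp:
  assumes "add_submonoid K" "add_submonoid L" "K \<subseteq> L"
  shows "subgroup (qgrp K) (vmon (qgrp L))"
proof -
  interpret K: add_submonoid K by fact
  interpret L: add_submonoid L by fact
  interpret group "vmon (qgrp L)"
    using L.comm_group_vmon_qgrp comm_group.axioms(2) by blast
  show ?thesis
  proof (rule subgroupI)
    show "qgrp K \<subseteq> carrier (vmon (qgrp L))"
      using qgrp_mono[OF assms(3)] by simp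
    show "qgrp K \<noteq> {}"
      using K.subset_qgrp K.zero_closed by blast
  next
    fix a
    assume "a \<in> qgrp K"
    then show "inv\<^bsub>vmon (qgrp L)\<^esub> a \<in> qgrp K"
      using L.inv_vmon_qgrp qgrp_mono[OF assms(3)] K.qgrp_uminus by auto
  next
    fix a b
    assume "a \<in> qgrp K" "b \<in> qgrp K"
    then show "a \<otimes>\<^bsub>vmon (qgrp L)\<^esub> b \<in> qgrp K"
      using K.qgrp_add by simp
  qed
qed

lemma add_submonoid_vec_image:
  assumes "\<And>A B. A \<in> M \<Longrightarrow> B \<in> M \<Longrightarrow> A + B \<in> M" "{#} \<in> M"
  shows "add_submonoid (vec ` M)"
proof
  show "(\<lambda>g. a g + b g) \<in> vec ` M" if ab: "a \<in> vec ` M" "b \<in> vec ` M" for a b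
  proof -
    obtain A B where AB: "A \<in> M" "B \<in> M" "a = vec A" "b = vec B"
      using ab by blast
    then have "(\<lambda>g. a g + b g) = vec (A + B)"
      by (simp add: vec_add)
    then show ?thesis
      by (rule rev_image_eqI[OF assms(1)[OF AB(1,2)]])
  qed
  show "(\<lambda>g. 0) \<in> vec ` M"
    using imageI[OF assms(2), of vec] by (simp add: vec_empty)
qed

lemma add_submonoid_vec_seqs: "add_submonoid (vec ` seqs A)"
  by (rule add_submonoid_vec_image) auto

lemma vec_divides_iff:
  assumes "S \<in> seqs A" "T \<in> seqs A"
  shows "vec S divides\<^bsub>vmon (vec ` seqs A)\<^esub> vec T \<longleftrightarrow> S \<subseteq># T"
proof
  assume "vec S divides\<^bsub>vmon (vec ` seqs A)\<^esub> vec T"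
  then obtain C where "vec T = (\<lambda>g. vec S g + vec C g)"
    unfolding factor_def by auto
  then have "vec T = vec (S + C)"
    by (simp add: vec_add)
  then have "T = S + C"
    by (rule injD[OF inj_vec])
  then show "S \<subseteq># T"
    by simp
next
  assume "S \<subseteq># T"
  then have "vec T = vec S \<otimes>\<^bsub>vmon (vec ` seqs A)\<^esub> vec (T - S)"
    by (simp flip: vec_add)
  moreover have "vec (T - S) \<in> carrier (vmon (vec ` seqs A))"
    by (simp add: diff_in_seqs[OF assms(2)])
  ultimately show "vec S divides\<^bsub>vmon (vec ` seqs A)\<^esub> vec T"
    unfolding factor_def by blast
qed

lemma count_image_mset_inj: "inj f \<Longrightarrow> count (image_mset f A) (f x) = count A x"
  by (induction A) (auto dest: injD)

text \<open>The basis of \<open>vmon (vec ` seqs A)\<close> consists of the indicator functions \<open>vec {#a#}\<close>, \<open>a \<in> A\<close>.\<close>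
lemma free_abelian_vmon_vec_seqs: "free_abelian (vmon (vec ` seqs A))"
proof -
  define e :: "'a \<Rightarrow> 'a \<Rightarrow> int" where "e a = vec {#a#}" for a
  define f where "f m = (\<lambda>a. int (count m (e a)))" for m
  have inj_e: "inj e"
    unfolding e_def by (rule injI) (simp add: inj_eq[OF inj_vec])
  have f_image: "f (image_mset e S) = vec S" for S
    using count_image_mset_inj[OF inj_e] by (simp add: f_def vec_def fun_eq_iff)
  have "inj_on f {m. set_mset m \<subseteq> e ` A}"
  proof (rule inj_onI)
    fix m n
    assume mn: "m \<in> {m. set_mset m \<subseteq> e ` A}" "n \<in> {m. set_mset m \<subseteq> e ` A}" "f m = f n"
    show "m = n"
    proof (rule multiset_eqI)
      fix p
      show "count m p = count n p"
      proof (cases "p \<in> e ` A")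
        case True
        then show ?thesis
          using fun_cong[OF mn(3)] by (auto simp: f_def)
      next
        case False
        then have "p \<notin># m" "p \<notin># n"
          using mn(1,2) by auto
        then show ?thesis
          by (simp add: not_in_iff)
      qed
    qed
  qed
  moreover have "f ` {m. set_mset m \<subseteq> e ` A} = vec ` seqs A"
  proof
    show "vec ` seqs A \<subseteq> f ` {m. set_mset m \<subseteq> e ` A}"
    proof
      fix x
      assume "x \<in> vec ` seqs A"
      then obtain S where S: "S \<in> seqs A" "x = vec S"
        by blast
      then have "image_mset e S \<in> {m. set_mset m \<subseteq> e ` A}"
        by (auto simp: seqs_def)
      then show "x \<in> f ` {m. set_mset m \<subseteq> e ` A}"
        using f_image S(2) by (metis image_eqI)
    qed
    show "f ` {m. set_mset m \<subseteq> e ` A} \<subseteq> vec ` seqs A"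
    proof
      fix x
      assume "x \<in> f ` {m. set_mset m \<subseteq> e ` A}"
      then obtain m where m: "set_mset m \<subseteq> e ` A" "x = f m"
        by blast
      define S where "S = image_mset (inv_into UNIV e) m"
      have "m = image_mset e S"
        using m(1) unfolding S_def multiset.map_comp
        by (intro multiset.map_ident_strong[symmetric]) (auto simp: f_inv_into_f)
      moreover have "S \<in> seqs A"
        using m(1) inj_e by (auto simp: S_def seqs_def)
      ultimately show "x \<in> vec ` seqs A"
        using f_image m(2) by blast
    qed
  qed
  ultimately show ?thesis
    unfolding free_abelian_def
    by (intro exI[of _ "e ` A"] exI[of _ f]) (simp add: bij_betw_def f_def fun_eq_iff)
qed

lemma nonneg_of_translates_nonneg:
  fixes c x :: int
  assumes "0 \<le> c" "\<And>n::nat. 1 \<le> n \<Longrightarrow> 0 \<le> c + int n * x"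
  shows "0 \<le> x"
proof (rule ccontr)
  assume "\<not> 0 \<le> x"
  then have "(c + 1) * x \<le> (c + 1) * (-1)"
    using assms(1) by (intro mult_left_mono) auto
  moreover have "0 \<le> c + (c + 1) * x"
    using assms(2)[of "nat c + 1"] assms(1) by (simp add: add.commute)
  ultimately show False
    by simp
qed

lemma cic_vec_subset:
  assumes "M \<subseteq> seqs A"
  shows "cic (vec ` M) \<subseteq> vec ` seqs A"
proof
  fix x
  assume x: "x \<in> cic (vec ` M)"
  then obtain S T where ST: "S \<in> M" "T \<in> M" "x = (\<lambda>g. vec S g - vec T g)"
    by (auto simp: cic_def mem_qgrp_iff)
  obtain c where c: "c \<in> vec ` M" "\<And>n::nat. 1 \<le> n \<Longrightarrow> (\<lambda>g. c g + int n * x g) \<in> vec ` M"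
    using x by (auto simp: cic_def)
  have "0 \<le> x g" for g
  proof (rule nonneg_of_translates_nonneg)
    obtain C where "c = vec C"
      using c(1) by blast
    then show "0 \<le> c g"
      by (simp add: vec_nonneg)
    show "0 \<le> c g + int n * x g" if n: "1 \<le> n" for n :: nat
    proof -
      obtain D where "(\<lambda>g. c g + int n * x g) = vec D"
        using c(2)[OF n] by blast
      then show ?thesis
        using vec_nonneg[of D g] by (simp add: fun_eq_iff)
    qed
  qed
  then have "x = vec (S - T)"
    using ST(3) vec_diff[of T S] by simp
  moreover have "S - T \<in> seqs A"
    using ST(1) assms diff_in_seqs by blast
  ultimately show "x \<in> vec ` seqs A"
    by simp
qed

lemma (in group) rcos_eq_iff_mult_inv_mem:
  assumes "subgroup H G" "x \<in> carrier G" "y \<in> carrier G"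
  shows "H #> x = H #> y \<longleftrightarrow> x \<otimes> inv y \<in> H"
proof
  assume "H #> x = H #> y"
  then have "x \<in> H #> y"
    using rcos_self[OF assms(2,1)] by simp
  then show "x \<otimes> inv y \<in> H"
    using subgroup.rcos_module_imp[OF assms(1) is_group assms(3)] by blast
next
  assume "x \<otimes> inv y \<in> H"
  then have "x \<in> H #> y"
    using subgroup.rcos_module_rev[OF assms(1) is_group assms(3,2)] by blast
  then show "H #> x = H #> y"
    using repr_independence[OF _ assms(3,1)] by simp
qed

section \<open>Products of sequences and the commutator subgroup\<close>

definition (in monoid) list_prod :: "'a list \<Rightarrow> 'a" where
  "list_prod xs = foldr (\<otimes>) xs \<one>"

context group
begin

lemma list_prod_Nil [simp]: "list_prod [] = \<one>"
  and list_prod_Cons [simp]: "list_prod (x # xs) = x \<otimes> list_prod xs"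
  by (simp_all add: list_prod_def)

lemma prods_eq: "prods G S = {list_prod xs | xs. mset xs = S}"
  by (simp add: prods_def list_prod_def)

lemma list_prod_closed [simp]: "set xs \<subseteq> carrier G \<Longrightarrow> list_prod xs \<in> carrier G"
  by (induction xs) auto

lemma list_prod_append:
  "set xs \<subseteq> carrier G \<Longrightarrow> set ys \<subseteq> carrier G \<Longrightarrow> list_prod (xs @ ys) = list_prod xs \<otimes> list_prod ys"
  by (induction xs) (auto simp: m_assoc)

lemma list_prod_replicate: "x \<in> carrier G \<Longrightarrow> list_prod (replicate n x) = x [^] n"
  by (induction n) (simp_all add: nat_pow_Suc2[symmetric])

lemma list_prod_concat_replicate:
  "set xs \<subseteq> carrier G \<Longrightarrow> list_prod (concat (replicate n xs)) = list_prod xs [^] n"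
proof (induction n)
  case (Suc n)
  have "set (concat (replicate n xs)) \<subseteq> carrier G"
    using Suc.prems by auto
  with Suc show ?case
    by (simp add: list_prod_append nat_pow_Suc2[symmetric])
qed simp

lemma list_prod_mem_prods: "mset xs = S \<Longrightarrow> list_prod xs \<in> prods G S"
  by (auto simp: prods_eq)

lemma ex_mem_prods: "\<exists>p. p \<in> prods G S"
  using ex_mset[of S] list_prod_mem_prods by blast

lemma prods_closed: "S \<in> seqs (carrier G) \<Longrightarrow> p \<in> prods G S \<Longrightarrow> p \<in> carrier G"
  by (auto simp: prods_eq seqs_def)

lemma mult_mem_prods_add:
  assumes "S \<in> seqs (carrier G)" "T \<in> seqs (carrier G)" "p \<in> prods G S" "q \<in> prods G T"
  shows "p \<otimes> q \<in> prods G (S + T)"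
proof -
  obtain xs ys where "p = list_prod xs" "mset xs = S" "q = list_prod ys" "mset ys = T"
    using assms(3,4) by (auto simp: prods_eq)
  with assms(1,2) show ?thesis
    using list_prod_mem_prods[of "xs @ ys"] by (auto simp: list_prod_append seqs_def)
qed

lemma pow_mem_prods_repeat:
  assumes "S \<in> seqs (carrier G)" "p \<in> prods G S"
  shows "p [^] n \<in> prods G (repeat_mset n S)"
proof -
  obtain xs where xs: "p = list_prod xs" "mset xs = S"
    using assms(2) by (auto simp: prods_eq)
  moreover have "set xs \<subseteq> carrier G"
    using xs(2) assms(1) by (auto simp: seqs_def)
  moreover have "mset (concat (replicate n xs)) = repeat_mset n S"
    using xs(2) by (induction n) auto
  ultimately show ?thesis
    using list_prod_mem_prods by (metis list_prod_concat_replicate)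
qed

lemma one_mem_prods_repeat_order:
  assumes "finite (carrier G)" "S \<in> seqs (carrier G)"
  shows "\<one> \<in> prods G (repeat_mset (order G) S)"
  using pow_mem_prods_repeat[OF assms(2)] ex_mem_prods[of S] prods_closed[OF assms(2)]
  by (metis assms(1) pow_order_eq_1)

lemma one_mem_prods_replicate_order:
  assumes "finite (carrier G)" "g \<in> carrier G"
  shows "\<one> \<in> prods G (replicate_mset (k * order G) g)"
proof -
  have "g [^] (k * order G) = \<one>"
    using assms by (simp add: mult.commute nat_pow_pow[symmetric] pow_order_eq_1)
  then show ?thesis
    using list_prod_mem_prods[of "replicate (k * order G) g"] list_prod_replicate[OF assms(2)]
    by simp
qed

lemma zss_add:
  assumes "G0 \<subseteq> carrier G" "A \<in> zss G G0" "B \<in> zss G G0"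
  shows "A + B \<in> zss G G0"
  using assms mult_mem_prods_add[of A B \<one> \<one>] seqs_mono[OF assms(1)] by (auto simp: zss_def)

lemma zss_empty [simp]: "{#} \<in> zss G G0"
  using list_prod_mem_prods[of "[]"] by (simp add: zss_def)

lemma ex_zss_complement:
  assumes "finite (carrier G)" "S \<in> seqs (carrier G)"
  shows "\<exists>V\<in>seqs (carrier G). S + V \<in> zss G (carrier G)"
proof
  have "order G = Suc (order G - 1)"
    using assms(1) order_gt_0_iff_finite by simp
  then have "repeat_mset (order G) S = S + repeat_mset (order G - 1) S"
    by (metis repeat_mset_Suc)
  then show "S + repeat_mset (order G - 1) S \<in> zss G (carrier G)"
    using one_mem_prods_repeat_order[OF assms] assms(2) repeat_mset_in_seqs
    by (auto simp: zss_def)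
qed (rule repeat_mset_in_seqs[OF assms(2)])

abbreviation "G' \<equiv> derived G (carrier G)"

lemma derived_self_subgroup: "subgroup G' G"
  by (simp add: derived_is_subgroup)

lemma derived_self_in_carrier: "G' \<subseteq> carrier G"
  by (simp add: derived_in_carrier)

lemma derived_coset_prods_eq:
  assumes "S \<in> seqs (carrier G)" "p \<in> prods G S" "q \<in> prods G S"
  shows "G' #> p = G' #> q"
proof -
  interpret Q: comm_group "G Mod G'"
    by (rule derived_quot_is_comm_group)
  have hom: "(#>) G' \<in> hom G (G Mod G')"
    by (rule normal.r_coset_hom_Mod[OF derived_self_is_normal])
  have coset_list_prod: "G' #> list_prod xs = foldr (\<otimes>\<^bsub>G Mod G'\<^esub>) (map ((#>) G') xs) G'"
    if "set xs \<subseteq> carrier G" for xs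
    using that
  proof (induction xs)
    case Nil
    show ?case
      using derived_self_in_carrier by simp
  qed (use hom in \<open>simp add: hom_mult\<close>)
  obtain xs ys where xs: "p = list_prod xs" "mset xs = S" and ys: "q = list_prod ys" "mset ys = S"
    using assms(2,3) by (auto simp: prods_eq)
  have carrier: "set xs \<subseteq> carrier G" "set ys \<subseteq> carrier G"
    using assms(1) xs(2) ys(2) by (auto simp: seqs_def simp flip: set_mset_mset)
  have "foldr (\<otimes>\<^bsub>G Mod G'\<^esub>) (map ((#>) G') xs) \<one>\<^bsub>G Mod G'\<^esub>
      = foldr (\<otimes>\<^bsub>G Mod G'\<^esub>) (map ((#>) G') ys) \<one>\<^bsub>G Mod G'\<^esub>"
  proof (rule Q.multlist_perm_cong)
    show "mset (map ((#>) G') xs) = mset (map ((#>) G') ys)"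
      using xs(2) ys(2) by simp
    show "set (map ((#>) G') xs) \<subseteq> carrier (G Mod G')"
      using carrier(1) hom by (auto simp: hom_def)
  qed
  then show ?thesis
    using xs(1) ys(1) coset_list_prod carrier by simp
qed


definition prod_coset :: "'a multiset \<Rightarrow> 'a set" where
  "prod_coset S = G' #> (SOME p. p \<in> prods G S)"

lemma prod_coset_eq:
  assumes "S \<in> seqs (carrier G)" "p \<in> prods G S"
  shows "prod_coset S = G' #> p"
  unfolding prod_coset_def using derived_coset_prods_eq[OF assms(1) _ assms(2)]
  by (metis assms(2) someI)

lemma prod_coset_closed:
  assumes "S \<in> seqs (carrier G)"
  shows "prod_coset S \<in> carrier (G Mod G')"
proof -
  obtain p where "p \<in> prods G S"
    using ex_mem_prods by blast
  then show ?thesis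
    using assms prod_coset_eq prods_closed by (auto simp: carrier_FactGroup)
qed

lemma prod_coset_add:
  assumes "S \<in> seqs (carrier G)" "T \<in> seqs (carrier G)"
  shows "prod_coset (S + T) = prod_coset S \<otimes>\<^bsub>G Mod G'\<^esub> prod_coset T"
proof -
  obtain p q where pq: "p \<in> prods G S" "q \<in> prods G T"
    using ex_mem_prods by blast
  have "prod_coset (S + T) = G' #> (p \<otimes> q)"
    using prod_coset_eq assms pq mult_mem_prods_add by simp
  also have "\<dots> = (G' #> p) <#> (G' #> q)"
    using normal.rcos_sum[OF derived_self_is_normal] pq assms prods_closed by simp
  finally show ?thesis
    using assms pq prod_coset_eq by simp
qed

lemma prod_coset_eq_derived_iff:
  assumes "S \<in> seqs (carrier G)" "p \<in> prods G S"
  shows "prod_coset S = G' \<longleftrightarrow> p \<in> G'"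
proof -
  have p: "p \<in> carrier G"
    using prods_closed[OF assms] .
  have "G' #> p = G' \<longleftrightarrow> p \<in> G'"
    using rcos_self[OF p derived_self_subgroup] coset_join2[OF p derived_self_subgroup] by auto
  then show ?thesis
    using prod_coset_eq[OF assms] by simp
qed

lemma prod_coset_zss: "S \<in> zss G (carrier G) \<Longrightarrow> prod_coset S = G'"
  using prod_coset_eq_derived_iff subgroup.one_closed[OF derived_self_subgroup] by (auto simp: zss_def)

lemma prod_coset_repeat:
  assumes "S \<in> seqs (carrier G)" "prod_coset S = G'"
  shows "prod_coset (repeat_mset n S) = G'"
proof (induction n)
  case (Suc n)
  interpret Q: group "G Mod G'"
    by (rule derived_quot_is_group)
  have "prod_coset (repeat_mset (Suc n) S) = G' \<otimes>\<^bsub>G Mod G'\<^esub> G'"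
    using Suc assms prod_coset_add[of S "repeat_mset n S"] repeat_mset_in_seqs[OF assms(1)] by simp
  then show ?case
    using Q.l_one[OF Q.one_closed] by simp
qed (simp add: prod_coset_zss)

lemma prods_subset_add_zss:
  assumes "S \<in> seqs (carrier G)" "W \<in> zss G (carrier G)"
  shows "prods G S \<subseteq> prods G (S + W)"
  using assms mult_mem_prods_add[of S W _ \<one>] prods_closed by (force simp: zss_def)

lemma commutator_in_prods_zss:
  assumes "a \<in> carrier G" "b \<in> carrier G"
  shows "\<exists>W\<in>zss G (carrier G).
    a \<otimes> b \<otimes> inv a \<otimes> inv b \<in> prods G W \<and> inv (a \<otimes> b \<otimes> inv a \<otimes> inv b) \<in> prods G W"
proof
  let ?W = "mset [a, b, inv a, inv b]"
  have "list_prod [a, inv a, b, inv b] = \<one>"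
    using assms by (simp add: m_assoc[symmetric])
  then show "?W \<in> zss G (carrier G)"
    using assms list_prod_mem_prods[of "[a, inv a, b, inv b]" ?W] by (auto simp: zss_def seqs_def)
  have "list_prod [a, b, inv a, inv b] = a \<otimes> b \<otimes> inv a \<otimes> inv b"
    "list_prod [b, a, inv b, inv a] = inv (a \<otimes> b \<otimes> inv a \<otimes> inv b)"
    using assms by (simp_all add: m_assoc inv_mult_group)
  then show "a \<otimes> b \<otimes> inv a \<otimes> inv b \<in> prods G ?W \<and> inv (a \<otimes> b \<otimes> inv a \<otimes> inv b) \<in> prods G ?W"
    using list_prod_mem_prods[of "[a, b, inv a, inv b]"] list_prod_mem_prods[of "[b, a, inv b, inv a]" ?W]
    by auto
qed

lemma derived_in_prods_zss:
  assumes "z \<in> G'"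
  shows "\<exists>W\<in>zss G (carrier G). z \<in> prods G W"
  using assms unfolding derived_def
proof (induction rule: generate.induct)
  case one
  show ?case
    using list_prod_mem_prods[of "[]"] by force
next
  case (incl h)
  then show ?case
    using commutator_in_prods_zss by blast
next
  case (inv h)
  then show ?case
    using commutator_in_prods_zss by blast
next
  case (eng h1 h2)
  then obtain W1 W2 where W: "W1 \<in> zss G (carrier G)" "h1 \<in> prods G W1"
    "W2 \<in> zss G (carrier G)" "h2 \<in> prods G W2"
    by blast
  then have "h1 \<otimes> h2 \<in> prods G (W1 + W2)"
    by (intro mult_mem_prods_add) (auto simp: zss_def)
  then show ?case
    using zss_add[OF subset_refl W(1,3)] by blast
qed

lemma ex_zss_prods_superset_derived:
  assumes "finite (carrier G)"
  shows "\<exists>C\<in>zss G (carrier G). G' \<subseteq> prods G C"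
proof -
  have "\<exists>C\<in>zss G (carrier G). Z \<subseteq> prods G C" if "finite Z" "Z \<subseteq> G'" for Z
    using that
  proof (induction Z rule: finite_induct)
    case empty
    show ?case
      using zss_empty by blast
  next
    case (insert z Z)
    then obtain C W where C: "C \<in> zss G (carrier G)" "Z \<subseteq> prods G C"
      and W: "W \<in> zss G (carrier G)" "z \<in> prods G W"
      using derived_in_prods_zss by (metis insert_subset)
    have "Z \<subseteq> prods G (C + W)" "z \<in> prods G (W + C)"
      using C W prods_subset_add_zss by (auto simp: zss_def)
    then show ?case
      using zss_add[OF subset_refl C(1) W(1)] by (auto simp: add.commute)
  qed
  then show ?thesis
    using assms derived_self_in_carrier finite_subset by blast
qed

lemma ex_zss_completion:
  assumes "finite (carrier G)"
  shows "\<exists>C\<in>zss G (carrier G). \<forall>S\<in>seqs (carrier G). prod_coset S = G' \<longrightarrow> S + C \<in> zss G (carrier G)"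
proof -
  obtain C where C: "C \<in> zss G (carrier G)" "G' \<subseteq> prods G C"
    using ex_zss_prods_superset_derived[OF assms] by blast
  have "S + C \<in> zss G (carrier G)" if S: "S \<in> seqs (carrier G)" "prod_coset S = G'" for S
  proof -
    obtain p where p: "p \<in> prods G S"
      using ex_mem_prods by blast
    then have "p \<in> G'"
      using prod_coset_eq_derived_iff S by blast
    then have "inv p \<in> prods G C"
      using C(2) subgroup.m_inv_closed[OF derived_self_subgroup] by blast
    then have "p \<otimes> inv p \<in> prods G (S + C)"
      using C(1) S(1) p mult_mem_prods_add by (auto simp: zss_def)
    then show ?thesis
      using S(1) C(1) p prods_closed by (auto simp: zss_def)
  qed
  then show ?thesis
    using C(1) by blast
qed

end

section \<open>Cofinality and the C-monoid property\<close>

lemma pigeonhole_atLeastAtMost: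
  assumes "f ` {0..n} \<subseteq> A" "finite A" "card A \<le> n"
  shows "\<exists>i j. i < j \<and> j \<le> n \<and> f i = f j"
proof -
  have "\<not> inj_on f {0..n}"
    using card_inj_on_le[OF _ assms(1,2)] assms(3) by auto
  then show ?thesis
    unfolding inj_on_def by (metis atLeastAtMost_iff linorder_neqE_nat)
qed

lemma ex_take_split:
  assumes "i \<le> j" "j \<le> length vs"
  shows "\<exists>as bs cs. vs = as @ bs @ cs \<and> take i vs = as \<and> take j vs = as @ bs \<and> length bs = j - i"
proof -
  have "take j vs = take i vs @ take (j - i) (drop i vs)"
    using assms take_add[of i "j - i" vs] by simp
  moreover have "vs = take j vs @ drop j vs"
    by simp
  ultimately show ?thesis
    using assms by (intro exI[of _ "take i vs"] exI[of _ "take (j - i) (drop i vs)"] exI[of _ "drop j vs"]) auto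
qed

definition concat_prefixed :: "'a \<Rightarrow> 'a list list \<Rightarrow> 'a list" where
  "concat_prefixed g ws = concat (map (Cons g) ws)"

lemma concat_prefixed_simps [simp]:
  "concat_prefixed g [] = []"
  "concat_prefixed g (w # ws) = g # w @ concat_prefixed g ws"
  "concat_prefixed g (ws @ ws') = concat_prefixed g ws @ concat_prefixed g ws'"
  by (simp_all add: concat_prefixed_def)

lemma mset_concat_prefixed:
  "mset (concat_prefixed g ws) = replicate_mset (length ws) g + mset (concat ws)"
  by (induction ws) (auto simp: add_ac)

lemma set_concat_prefixed:
  "set (concat_prefixed g ws) = (if ws = [] then {} else insert g (set (concat ws)))"
  by (induction ws) auto

lemma ex_concat_prefixed_decomposition:
  "\<exists>v0 vs. xs = v0 @ concat_prefixed g vs \<and> length vs = count (mset xs) g"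
proof (induction xs)
  case (Cons x xs)
  then obtain v0 vs where v: "xs = v0 @ concat_prefixed g vs" "length vs = count (mset xs) g"
    by blast
  show ?case
  proof (cases "x = g")
    case True
    then show ?thesis
      using v by (intro exI[of _ "[]"] exI[of _ "v0 # vs"]) simp
  next
    case False
    then show ?thesis
      using v by (intro exI[of _ "x # v0"] exI[of _ vs]) simp
  qed
qed simp

context group
begin

lemma list_prod_append3:
  "set xs \<subseteq> carrier G \<Longrightarrow> set ys \<subseteq> carrier G \<Longrightarrow> set zs \<subseteq> carrier G \<Longrightarrow>
    list_prod (xs @ ys @ zs) = list_prod xs \<otimes> list_prod ys \<otimes> list_prod zs"
  by (simp add: list_prod_append m_assoc)

lemma eq_if_mult_mult_inv_eq:
  assumes "a \<in> carrier G" "b \<in> carrier G" "a' \<in> carrier G" "b' \<in> carrier G"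
    and "a \<otimes> b \<otimes> inv (a' \<otimes> b') = a \<otimes> inv a'"
  shows "b = b'"
proof -
  have "a \<otimes> \<one> \<otimes> inv a' = a \<otimes> (b \<otimes> inv b') \<otimes> inv a'"
    using assms by (simp add: inv_mult_group m_assoc)
  then have "\<one> = b \<otimes> inv b'"
    using assms(1-4) by simp
  then show ?thesis
    using assms(2,4) inv_equality[of b "inv b'"] by simp
qed

text \<open>A pigeonhole argument on the elements
  \<open>list_prod (concat_prefixed g us) \<otimes> inv (list_prod (concat us))\<close> for the prefixes \<open>us\<close> of \<open>vs\<close>
  whose length is a multiple of \<open>order G\<close>.\<close>
lemma ex_block_concat_prefixed_eq:
  assumes fin: "finite (carrier G)" and g: "g \<in> carrier G"
    and vs: "set (concat vs) \<subseteq> carrier G" and len: "order G * order G \<le> length vs"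
  shows "\<exists>as bs cs. vs = as @ bs @ cs \<and> bs \<noteq> [] \<and> order G dvd length bs \<and>
           list_prod (concat_prefixed g bs) = list_prod (concat bs)"
proof -
  define N where "N = order G"
  have closed: "set (concat_prefixed g us) \<subseteq> carrier G" "set (concat us) \<subseteq> carrier G"
    if "set (concat us) \<subseteq> carrier G" for us
    using that g by (auto simp: set_concat_prefixed)
  define twist where "twist k = list_prod (concat_prefixed g (take (k * N) vs)) \<otimes>
    inv (list_prod (concat (take (k * N) vs)))" for k
  have "set (concat (take r vs)) \<subseteq> carrier G" for r
    using vs by (auto dest: in_set_takeD)
  then have "twist ` {0..N} \<subseteq> carrier G"
    using closed by (auto simp: twist_def)
  then obtain i j where ij: "i < j" "j \<le> N" "twist i = twist j"
    using pigeonhole_atLeastAtMost[of twist N "carrier G"] fin by (auto simp: N_def order_def)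
  have "i * N \<le> j * N" "j * N \<le> length vs"
    using ij len N_def by (simp, meson le_trans mult_le_mono1)
  then obtain as bs cs where split: "vs = as @ bs @ cs" "take (i * N) vs = as"
    "take (j * N) vs = as @ bs" "length bs = j * N - i * N"
    using ex_take_split by blast
  have as_closed: "set (concat as) \<subseteq> carrier G" and bs_closed: "set (concat bs) \<subseteq> carrier G"
    using vs split(1) by auto
  have quotients_eq: "list_prod (concat_prefixed g as) \<otimes> list_prod (concat_prefixed g bs) \<otimes>
      inv (list_prod (concat as) \<otimes> list_prod (concat bs))
      = list_prod (concat_prefixed g as) \<otimes> inv (list_prod (concat as))"
    using ij(3) split(2,3) closed[OF as_closed] closed[OF bs_closed]
    by (simp add: twist_def list_prod_append)
  have "list_prod (concat_prefixed g as) \<in> carrier G" "list_prod (concat_prefixed g bs) \<in> carrier G"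
    "list_prod (concat as) \<in> carrier G" "list_prod (concat bs) \<in> carrier G"
    using closed[OF as_closed] closed[OF bs_closed] list_prod_closed by blast+
  then have "list_prod (concat_prefixed g bs) = list_prod (concat bs)"
    by (rule eq_if_mult_mult_inv_eq[OF _ _ _ _ quotients_eq])
  moreover have "bs \<noteq> []" "N dvd length bs"
    using split(4) ij fin order_gt_0_iff_finite N_def by (auto simp flip: diff_mult_distrib)
  ultimately show ?thesis
    using split(1) N_def by blast
qed

lemma list_prod_remove_block_separators:
  assumes fin: "finite (carrier G)" and g: "g \<in> carrier G"
    and closed: "set us \<subseteq> carrier G" "set ws \<subseteq> carrier G" "set (concat bs) \<subseteq> carrier G"
    and bs: "bs \<noteq> []" "order G dvd length bs" "list_prod (concat_prefixed g bs) = list_prod (concat bs)"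
  defines "ys \<equiv> us @ concat bs @ replicate (length bs - order G) g @ ws"
  shows "mset ys + replicate_mset (order G) g = mset (us @ concat_prefixed g bs @ ws)"
    and "list_prod ys = list_prod (us @ concat_prefixed g bs @ ws)"
proof -
  \<comment> \<open>of the \<open>length bs\<close> copies of \<open>g\<close> separating the blocks, all but \<open>order G\<close> are put back as
      a product-one block\<close>
  let ?r = "replicate (length bs - order G) g"
  have "order G \<le> length bs"
    using bs(1,2) by (simp add: dvd_imp_le)
  then have "replicate_mset (length bs) g = replicate_mset (length bs - order G) g + replicate_mset (order G) g"
    by (simp add: multiset_eq_iff)
  then show "mset ys + replicate_mset (order G) g = mset (us @ concat_prefixed g bs @ ws)"
    by (simp add: ys_def mset_concat_prefixed add_ac)
  obtain k where "length bs - order G = k * order G"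
    using bs(2) by (metis dvd_diff_nat dvd_refl dvd_def mult.commute)
  then have "list_prod ?r = \<one>"
    using g fin by (simp add: list_prod_replicate mult.commute nat_pow_pow[symmetric] pow_order_eq_1)
  moreover have r: "set ?r \<subseteq> carrier G"
    using g by auto
  ultimately have "list_prod (concat bs @ ?r) = list_prod (concat_prefixed g bs)"
    using list_prod_append[OF closed(3) r] closed(3) bs(3) by simp
  moreover have "set (concat bs @ ?r) \<subseteq> carrier G" "set (concat_prefixed g bs) \<subseteq> carrier G"
    using closed(3) r g by (auto simp: set_concat_prefixed)
  ultimately show "list_prod ys = list_prod (us @ concat_prefixed g bs @ ws)"
    using list_prod_append3[OF closed(1) _ closed(2)] by (metis append_assoc ys_def)
qed

lemma ex_list_prod_eq_fewer_copies:
  assumes fin: "finite (carrier G)" and xs: "set xs \<subseteq> carrier G"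
    and count: "order G * order G \<le> count (mset xs) g"
  shows "\<exists>ys. mset ys + replicate_mset (order G) g = mset xs \<and> list_prod ys = list_prod xs"
proof -
  have "0 < count (mset xs) g"
    using count fin order_gt_0_iff_finite by (metis le_zero_eq nat_0_less_mult_iff not_gr0)
  then have g: "g \<in> carrier G"
    using xs by auto
  obtain v0 vs where v: "xs = v0 @ concat_prefixed g vs" "length vs = count (mset xs) g"
    using ex_concat_prefixed_decomposition[of xs g] by blast
  then have v0: "set v0 \<subseteq> carrier G" and vs: "set (concat vs) \<subseteq> carrier G"
    using xs by (auto simp: set_concat_prefixed split: if_splits)
  obtain as bs cs where blocks: "vs = as @ bs @ cs" "bs \<noteq> []" "order G dvd length bs"
    "list_prod (concat_prefixed g bs) = list_prod (concat bs)"
    using ex_block_concat_prefixed_eq[OF fin g vs] v(2) count by auto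
  have xs_split: "xs = (v0 @ concat_prefixed g as) @ concat_prefixed g bs @ concat_prefixed g cs"
    by (simp add: v(1) blocks(1))
  have "set (v0 @ concat_prefixed g as) \<subseteq> carrier G" "set (concat_prefixed g cs) \<subseteq> carrier G"
    "set (concat bs) \<subseteq> carrier G"
    using v0 vs g blocks(1) by (auto simp: set_concat_prefixed)
  from list_prod_remove_block_separators[OF fin g this blocks(2-4)]
  show ?thesis
    unfolding xs_split[symmetric] by blast
qed

lemma prods_diff_replicate_order:
  assumes fin: "finite (carrier G)" and T: "T \<in> seqs (carrier G)"
    and count: "order G * order G \<le> count T g"
  shows "prods G (T - replicate_mset (order G) g) = prods G T"
proof
  show "prods G T \<subseteq> prods G (T - replicate_mset (order G) g)"
  proof
    fix p
    assume "p \<in> prods G T"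
    then obtain xs where xs: "p = list_prod xs" "mset xs = T"
      by (auto simp: prods_eq)
    moreover have "set xs \<subseteq> carrier G"
      using T xs(2) by (auto simp: seqs_def)
    ultimately obtain ys where "mset ys + replicate_mset (order G) g = T" "list_prod ys = p"
      using ex_list_prod_eq_fewer_copies[OF fin, of xs g] count by auto
    then show "p \<in> prods G (T - replicate_mset (order G) g)"
      using list_prod_mem_prods by (metis add_diff_cancel_right')
  qed
  have "0 < count T g"
    using count fin order_gt_0_iff_finite by (metis le_zero_eq nat_0_less_mult_iff not_gr0)
  then have g: "g \<in> carrier G"
    using T by (auto simp: seqs_def)
  have "order G \<le> count T g"
    using count le_square le_trans by blast
  then have T_split: "T = (T - replicate_mset (order G) g) + replicate_mset (order G) g"
    by (intro multiset_eqI) auto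
  show "prods G (T - replicate_mset (order G) g) \<subseteq> prods G T"
  proof
    fix p
    assume p: "p \<in> prods G (T - replicate_mset (order G) g)"
    have "replicate_mset (order G) g \<in> seqs (carrier G)" "\<one> \<in> prods G (replicate_mset (order G) g)"
      using g one_mem_prods_replicate_order[OF fin g, of 1] by (auto simp: seqs_def)
    then have "p \<otimes> \<one> \<in> prods G T"
      using mult_mem_prods_add[OF diff_in_seqs[OF T] _ p] T_split by metis
    then show "p \<in> prods G T"
      using prods_closed[OF diff_in_seqs[OF T] p] by simp
  qed
qed

lemma H_equiv_diff_replicate_order:
  assumes fin: "finite (carrier G)" and G0: "G0 \<subseteq> carrier G" and y: "y \<in> seqs G0"
    and count: "order G * order G \<le> count y g"
  shows "H_equiv (zss G G0) (msmon (seqs G0)) y (y - replicate_mset (order G) g)"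
proof -
  have "order G \<le> count y g"
    using count le_square le_trans by blast
  then have "y - replicate_mset (order G) g + x = y + x - replicate_mset (order G) g" for x
    by (simp add: multiset_eq_iff)
  moreover have "prods G (y + x - replicate_mset (order G) g) = prods G (y + x)" if "x \<in> seqs G0" for x
    using that y count G0 by (intro prods_diff_replicate_order[OF fin]) (auto intro: seqs_mono)
  ultimately show ?thesis
    using y by (auto simp: H_equiv_def zss_def diff_in_seqs)
qed

lemma finite_H_classes:
  assumes fin: "finite (carrier G)" and G0: "G0 \<subseteq> carrier G"
  shows "finite (H_class (zss G G0) (msmon (seqs G0)) ` seqs G0)"
proof -
  let ?N = "order G * order G"
  define R where "R = {y \<in> seqs G0. \<forall>g. count y g < ?N}"
  have "\<exists>y' \<in> R. H_equiv (zss G G0) (msmon (seqs G0)) y y'" if "y \<in> seqs G0" for y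
    using that
  proof (induction y rule: measure_induct_rule[of size])
    case (less y)
    show ?case
    proof (cases "y \<in> R")
      case False
      then obtain g where g: "?N \<le> count y g"
        using less.prems by (auto simp: R_def not_less)
      then have "order G \<le> count y g"
        using le_square le_trans by blast
      then have "replicate_mset (order G) g \<subseteq># y"
        by (simp add: subseteq_mset_def)
      moreover have "0 < order G"
        using fin order_gt_0_iff_finite by simp
      ultimately have "size (y - replicate_mset (order G) g) < size y"
        using size_mset_mono[of "replicate_mset (order G) g" y] by (simp add: size_Diff_submset)
      then obtain y' where "y' \<in> R" "H_equiv (zss G G0) (msmon (seqs G0)) (y - replicate_mset (order G) g) y'"
        using less.IH diff_in_seqs[OF less.prems] by blast
      then show ?thesis
        using H_equiv_trans[OF H_equiv_diff_replicate_order[OF fin G0 less.prems g]] by blast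
    qed (auto intro: H_equiv_refl)
  qed
  then have "H_class (zss G G0) (msmon (seqs G0)) ` seqs G0 \<subseteq> H_class (zss G G0) (msmon (seqs G0)) ` R"
  proof (intro image_subsetI)
    fix y
    assume "y \<in> seqs G0"
    then obtain y' where "y' \<in> R" "H_equiv (zss G G0) (msmon (seqs G0)) y y'"
      using \<open>\<And>y. y \<in> seqs G0 \<Longrightarrow> _\<close> by blast
    then show "H_class (zss G G0) (msmon (seqs G0)) y \<in> H_class (zss G G0) (msmon (seqs G0)) ` R"
      using H_class_eq by (metis imageI)
  qed
  moreover have "finite R"
    unfolding R_def by (rule finite_bounded_multisets[OF finite_subset[OF G0 fin]])
  ultimately show ?thesis
    by (rule finite_subset[OF _ finite_imageI])
qed

lemma cofinal_zss:
  assumes fin: "finite (carrier G)" and G0: "G0 \<subseteq> carrier G"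
  shows "cofinal (zss G G0) (msmon (seqs G0))"
  unfolding cofinal_def
proof
  fix S
  assume S: "S \<in> carrier (msmon (seqs G0))"
  then have "repeat_mset (order G) S \<in> zss G G0"
    using one_mem_prods_repeat_order[OF fin] seqs_mono[OF G0] repeat_mset_in_seqs
    by (auto simp: zss_def)
  moreover have "S \<subseteq># repeat_mset (order G) S"
    using fin order_gt_0_iff_finite by (auto simp: subseteq_mset_def)
  moreover have "repeat_mset (order G) S \<in> seqs G0"
    using S repeat_mset_in_seqs by simp
  ultimately show "\<exists>h\<in>zss G G0. S divides\<^bsub>msmon (seqs G0)\<^esub> h"
    using S msmon_seqs_divides_iff[of S G0 "repeat_mset (order G) S"] by auto
qed

lemma C_monoid_zss:
  assumes fin: "finite (carrier G)" and G0: "G0 \<subseteq> carrier G"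
  shows "C_monoid (msmon (zss G G0))"
  unfolding C_monoid_def
proof (intro exI[of _ "msmon (seqs G0)"] conjI ballI)
  have "class_star (zss G G0) (msmon (seqs G0)) \<subseteq> H_class (zss G G0) (msmon (seqs G0)) ` seqs G0"
    unfolding class_star_def by auto
  then show "finite (class_star (carrier (msmon (zss G G0))) (msmon (seqs G0)))"
    using finite_H_classes[OF fin G0] finite_subset by auto
qed (auto simp: factorial_monoid_msmon_seqs Units_msmon zss_def)

lemma count_zss_eq_UNIV:
  assumes card: "3 \<le> card (carrier G)" and g: "g \<in> carrier G"
  shows "{count S g | S. S \<in> zss G (carrier G)} = (UNIV :: nat set)"
proof -
  have "\<exists>S \<in> zss G (carrier G). count S g = n" for n
  proof -
    obtain x where x: "x \<in> carrier G" "x \<noteq> g" "x \<noteq> inv (g [^] n) \<otimes> inv g"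
      using ex_mem_other_than_two[OF card] by blast
    define y where "y = inv (g [^] n \<otimes> x)"
    \<comment> \<open>the choice of \<open>x\<close> guarantees \<open>y \<noteq> g\<close>\<close>
    have y: "y \<in> carrier G" "y \<noteq> g"
    proof -
      show "y \<in> carrier G"
        using x g by (simp add: y_def)
      show "y \<noteq> g"
      proof
        assume "y = g"
        then have "g [^] n \<otimes> x = inv g"
          using x g by (metis y_def inv_inv m_closed nat_pow_closed)
        then show False
          using x g inv_solve_left by simp
      qed
    qed
    define xs where "xs = replicate n g @ [x, y]"
    have "list_prod xs = g [^] n \<otimes> (x \<otimes> y)"
      using g x y list_prod_append[of "replicate n g" "[x, y]"]
      by (simp add: xs_def list_prod_replicate set_replicate_conv_if)
    also have "\<dots> = \<one>"
      using g x by (simp add: y_def m_assoc[symmetric])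
    finally have "mset xs \<in> zss G (carrier G)"
      using g x y list_prod_mem_prods[of xs] by (auto simp: zss_def seqs_def xs_def)
    moreover have "count (mset xs) g = n"
      using x y by (simp add: xs_def)
    ultimately show ?thesis
      by blast
  qed
  then show ?thesis
    by (metis (mono_tags, lifting) UNIV_eq_I mem_Collect_eq)
qed

section \<open>The class group and the complete integral closure\<close>

lemma prod_coset_add_zss:
  assumes "S \<in> seqs (carrier G)" "W \<in> zss G (carrier G)"
  shows "prod_coset (S + W) = prod_coset S"
proof -
  interpret Q: group "G Mod G'"
    by (rule derived_quot_is_group)
  have "prod_coset (S + W) = prod_coset S \<otimes>\<^bsub>G Mod G'\<^esub> \<one>\<^bsub>G Mod G'\<^esub>"
    using assms prod_coset_add prod_coset_zss by (auto simp: zss_def)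
  then show ?thesis
    using Q.r_one[OF prod_coset_closed[OF assms(1)]] by simp
qed

lemma add_submonoid_vec_zss: "add_submonoid (vec ` zss G (carrier G))"
  by (rule add_submonoid_vec_image) (auto intro: zss_add)

lemma vec_diff_in_qgrp_zss_iff:
  assumes fin: "finite (carrier G)" and S: "S \<in> seqs (carrier G)" and T: "T \<in> seqs (carrier G)"
  shows "(\<lambda>g. vec S g - vec T g) \<in> qgrp (vec ` zss G (carrier G)) \<longleftrightarrow> prod_coset S = prod_coset T"
proof
  assume "(\<lambda>g. vec S g - vec T g) \<in> qgrp (vec ` zss G (carrier G))"
  then obtain A B where AB: "A \<in> zss G (carrier G)" "B \<in> zss G (carrier G)"
    "(\<lambda>g. vec S g - vec T g) = (\<lambda>g. vec A g - vec B g)"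
    by (auto simp: mem_qgrp_iff)
  then have "vec (S + B) = vec (A + T)"
    by (simp add: vec_add fun_eq_iff algebra_simps)
  then have "S + B = A + T"
    by (rule injD[OF inj_vec])
  then show "prod_coset S = prod_coset T"
    using AB(1,2) S T prod_coset_add_zss by (metis add.commute)
next
  assume eq: "prod_coset S = prod_coset T"
  obtain V where V: "V \<in> seqs (carrier G)" "T + V \<in> zss G (carrier G)"
    using ex_zss_complement[OF fin T] by blast
  obtain C where C: "C \<in> zss G (carrier G)"
    "\<And>W. W \<in> seqs (carrier G) \<Longrightarrow> prod_coset W = G' \<Longrightarrow> W + C \<in> zss G (carrier G)"
    using ex_zss_completion[OF fin] by blast
  have "prod_coset (S + V) = prod_coset (T + V)"
    using S T V(1) eq prod_coset_add by simp
  then have "S + V + C \<in> zss G (carrier G)" "T + V + C \<in> zss G (carrier G)"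
    using C S T V prod_coset_zss by simp_all
  moreover have "(\<lambda>g. vec S g - vec T g) = (\<lambda>g. vec (S + V + C) g - vec (T + V + C) g)"
    by (simp add: vec_add)
  ultimately show "(\<lambda>g. vec S g - vec T g) \<in> qgrp (vec ` zss G (carrier G))"
    by (simp add: diff_in_qgrp)
qed

lemma cic_zss_eq:
  assumes fin: "finite (carrier G)"
  shows "cic (vec ` zss G (carrier G)) = qgrp (vec ` zss G (carrier G)) \<inter> vec ` seqs (carrier G)"
proof
  show "cic (vec ` zss G (carrier G)) \<subseteq> qgrp (vec ` zss G (carrier G)) \<inter> vec ` seqs (carrier G)"
    using cic_vec_subset[of "zss G (carrier G)"] by (auto simp: cic_def zss_def)
  show "qgrp (vec ` zss G (carrier G)) \<inter> vec ` seqs (carrier G) \<subseteq> cic (vec ` zss G (carrier G))"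
  proof
    fix x
    assume x: "x \<in> qgrp (vec ` zss G (carrier G)) \<inter> vec ` seqs (carrier G)"
    then obtain S where S: "S \<in> seqs (carrier G)" "x = vec S"
      by blast
    then have "(\<lambda>g. vec S g - vec {#} g) \<in> qgrp (vec ` zss G (carrier G))"
      using x by (simp add: vec_empty)
    then have "prod_coset S = G'"
      using vec_diff_in_qgrp_zss_iff[OF fin S(1) seqs_empty] prod_coset_zss[OF zss_empty] by simp
    \<comment> \<open>a completion \<open>C\<close> of all sequences with product in \<open>G'\<close> is the required \<open>c\<close>\<close>
    moreover obtain C where C: "C \<in> zss G (carrier G)"
      "\<And>W. W \<in> seqs (carrier G) \<Longrightarrow> prod_coset W = G' \<Longrightarrow> W + C \<in> zss G (carrier G)"
      using ex_zss_completion[OF fin] by blast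
    ultimately have zss: "repeat_mset n S + C \<in> zss G (carrier G)" for n
      using S(1) prod_coset_repeat repeat_mset_in_seqs by blast
    have "(\<lambda>g. vec C g + int n * x g) \<in> vec ` zss G (carrier G)" for n
    proof (rule rev_image_eqI[OF zss])
      show "(\<lambda>g. vec C g + int n * x g) = vec (repeat_mset n S + C)"
        by (simp add: S(2) vec_add vec_repeat_mset add.commute)
    qed
    then show "x \<in> cic (vec ` zss G (carrier G))"
      using x C(1) by (auto simp: cic_def)
  qed
qed

lemma vec_zss_subset_cic:
  assumes "finite (carrier G)"
  shows "vec ` zss G (carrier G) \<subseteq> cic (vec ` zss G (carrier G))"
proof -
  have "vec ` zss G (carrier G) \<subseteq> vec ` seqs (carrier G)"
    by (auto simp: zss_def)
  then show ?thesis
    using add_submonoid.subset_qgrp[OF add_submonoid_vec_zss] by (auto simp: cic_zss_eq[OF assms])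
qed

lemma qgrp_cic_zss:
  assumes "finite (carrier G)"
  shows "qgrp (cic (vec ` zss G (carrier G))) = qgrp (vec ` zss G (carrier G))"
proof
  show "qgrp (cic (vec ` zss G (carrier G))) \<subseteq> qgrp (vec ` zss G (carrier G))"
    using qgrp_mono[of "cic (vec ` zss G (carrier G))" "qgrp (vec ` zss G (carrier G))"]
      add_submonoid.qgrp_qgrp[OF add_submonoid_vec_zss] by (auto simp: cic_def)
  show "qgrp (vec ` zss G (carrier G)) \<subseteq> qgrp (cic (vec ` zss G (carrier G)))"
    by (rule qgrp_mono[OF vec_zss_subset_cic[OF assms]])
qed

text \<open>The gcd of the two product-one sequences \<open>S t\<close> and \<open>S a b\<close>, where \<open>t\<close> is the inverse of a product
  of \<open>S\<close> and \<open>a b = t\<close> with \<open>t \<notin> {a, b}\<close>, is \<open>S\<close>.\<close>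
lemma ex_gcd_set_vec_zss:
  assumes card: "3 \<le> card (carrier G)" and S: "S \<in> seqs (carrier G)"
  shows "\<exists>A. finite A \<and> A \<subseteq> vec ` zss G (carrier G) \<and> is_gcd_set (vmon (vec ` seqs (carrier G))) (vec S) A"
proof -
  obtain s where s: "s \<in> prods G S"
    using ex_mem_prods by blast
  define t where "t = inv s"
  have t: "t \<in> carrier G" "s \<otimes> t = \<one>"
    using prods_closed[OF S s] by (simp_all add: t_def)
  obtain a where a: "a \<in> carrier G" "a \<noteq> \<one>" "a \<noteq> t"
    using ex_mem_other_than_two[OF card] by blast
  define b where "b = inv a \<otimes> t"
  have b: "b \<in> carrier G" "b \<noteq> t" "a \<otimes> b = t"
    using a t by (auto simp: b_def m_assoc[symmetric])
  let ?T1 = "{#t#}" and ?T2 = "{#a, b#}"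
  have T: "?T1 \<in> seqs (carrier G)" "?T2 \<in> seqs (carrier G)"
    using t a b by (auto simp: seqs_def)
  have "t \<in> prods G ?T1" "t \<in> prods G ?T2"
    using list_prod_mem_prods[of "[t]"] list_prod_mem_prods[of "[a, b]"] t b by auto
  then have "s \<otimes> t \<in> prods G (S + ?T1)" "s \<otimes> t \<in> prods G (S + ?T2)"
    using mult_mem_prods_add[OF S T(1) s] mult_mem_prods_add[OF S T(2) s] by blast+
  then have zss: "S + ?T1 \<in> zss G (carrier G)" "S + ?T2 \<in> zss G (carrier G)"
    using S T t(2) by (simp_all add: zss_def)
  have ST: "S + ?T1 \<in> seqs (carrier G)" "S + ?T2 \<in> seqs (carrier G)"
    using S T by (simp_all only: seqs_add)
  have "is_gcd_set (vmon (vec ` seqs (carrier G))) (vec S) {vec (S + ?T1), vec (S + ?T2)}"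
    unfolding is_gcd_set_def
  proof (intro conjI ballI impI)
    show "vec S \<in> carrier (vmon (vec ` seqs (carrier G)))"
      using S by simp
    show "vec S divides\<^bsub>vmon (vec ` seqs (carrier G))\<^esub> y" if "y \<in> {vec (S + ?T1), vec (S + ?T2)}" for y
      using that vec_divides_iff[OF S ST(1)] vec_divides_iff[OF S ST(2)] by auto
  next
    fix d
    assume "d \<in> carrier (vmon (vec ` seqs (carrier G)))"
      and d: "\<forall>y\<in>{vec (S + ?T1), vec (S + ?T2)}. d divides\<^bsub>vmon (vec ` seqs (carrier G))\<^esub> y"
    then obtain U where U: "U \<in> seqs (carrier G)" "d = vec U"
      by auto
    then have "U \<subseteq># S + ?T1" "U \<subseteq># S + ?T2"
      using d vec_divides_iff[OF U(1) ST(1)] vec_divides_iff[OF U(1) ST(2)] by auto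
    moreover have "?T1 \<inter># ?T2 = {#}"
      using a(3) b(2) by auto
    ultimately show "d divides\<^bsub>vmon (vec ` seqs (carrier G))\<^esub> vec S"
      using U S vec_divides_iff subset_mset_add_disjoint by metis
  qed
  then show ?thesis
    using zss by (intro exI[of _ "{vec (S + ?T1), vec (S + ?T2)}"]) auto
qed

lemma divisor_theory_cic_zss:
  assumes fin: "finite (carrier G)" and card: "3 \<le> card (carrier G)"
  shows "divisor_theory (vmon (cic (vec ` zss G (carrier G)))) (vmon (vec ` seqs (carrier G))) id"
  unfolding divisor_theory_def
proof (intro conjI ballI impI)
  show "id \<in> hom (vmon (cic (vec ` zss G (carrier G)))) (vmon (vec ` seqs (carrier G)))"
    unfolding hom_def using cic_zss_eq[OF fin] by auto
  show "free_abelian (vmon (vec ` seqs (carrier G)))"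
    by (rule free_abelian_vmon_vec_seqs)
next
  fix a b
  assume ab: "a \<in> carrier (vmon (cic (vec ` zss G (carrier G))))" "b \<in> carrier (vmon (cic (vec ` zss G (carrier G))))"
    and "id a divides\<^bsub>vmon (vec ` seqs (carrier G))\<^esub> id b"
  then obtain c where c: "c \<in> vec ` seqs (carrier G)" "b = (\<lambda>g. a g + c g)"
    unfolding factor_def by auto
  have "c = (\<lambda>g. b g - a g)"
    using c(2) by (simp add: fun_eq_iff)
  then have "c \<in> qgrp (vec ` zss G (carrier G))"
    using ab add_submonoid.qgrp_diff[OF add_submonoid_vec_zss] by (simp add: cic_zss_eq[OF fin])
  then have "c \<in> cic (vec ` zss G (carrier G))"
    using c(1) by (simp add: cic_zss_eq[OF fin])
  then show "a divides\<^bsub>vmon (cic (vec ` zss G (carrier G)))\<^esub> b"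
    unfolding factor_def using c(2) by auto
next
  fix \<alpha>
  assume "\<alpha> \<in> carrier (vmon (vec ` seqs (carrier G)))"
  then show "\<exists>A. finite A \<and> A \<subseteq> id ` carrier (vmon (cic (vec ` zss G (carrier G)))) \<and>
      is_gcd_set (vmon (vec ` seqs (carrier G))) \<alpha> A"
    using ex_gcd_set_vec_zss[OF card] vec_zss_subset_cic[OF fin] by fastforce
qed simp

abbreviation "QF \<equiv> vmon (qgrp (vec ` seqs (carrier G)))"
abbreviation "QB \<equiv> qgrp (vec ` zss G (carrier G))"

lemma comm_group_QF: "comm_group QF"
  by (rule add_submonoid.comm_group_vmon_qgrp[OF add_submonoid_vec_seqs])

lemma subgroup_QB: "subgroup QB QF"
  by (rule subgroup_qgrp[OF add_submonoid_vec_zss add_submonoid_vec_seqs]) (auto simp: zss_def)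

lemma group_QF_Mod_QB: "group (QF Mod QB)"
  using comm_group.subgroup_imp_normal[OF comm_group_QF subgroup_QB] normal.factorgroup_is_group
  by blast

lemma vec_in_QF: "S \<in> seqs (carrier G) \<Longrightarrow> vec S \<in> carrier QF"
  using add_submonoid.subset_qgrp[OF add_submonoid_vec_seqs] by auto

lemma inv_QF_vec: "S \<in> seqs (carrier G) \<Longrightarrow> inv\<^bsub>QF\<^esub> vec S = (\<lambda>g. - vec S g)"
  using add_submonoid.inv_vmon_qgrp[OF add_submonoid_vec_seqs, of "vec S" "carrier G"] vec_in_QF[of S]
  by simp

lemma rcos_vec_eq_iff:
  assumes fin: "finite (carrier G)" and S: "S \<in> seqs (carrier G)" and T: "T \<in> seqs (carrier G)"
  shows "QB #>\<^bsub>QF\<^esub> vec S = QB #>\<^bsub>QF\<^esub> vec T \<longleftrightarrow> prod_coset S = prod_coset T"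
proof -
  interpret QF: comm_group QF
    by (rule comm_group_QF)
  have "vec S \<otimes>\<^bsub>QF\<^esub> inv\<^bsub>QF\<^esub> vec T = (\<lambda>g. vec S g - vec T g)"
    by (simp add: inv_QF_vec[OF T])
  then show ?thesis
    using QF.rcos_eq_iff_mult_inv_mem[OF subgroup_QB vec_in_QF[OF S] vec_in_QF[OF T]]
      vec_diff_in_qgrp_zss_iff[OF fin S T] by simp
qed

lemma derived_coset_eq_if_rcos_vec_eq:
  assumes "finite (carrier G)" "S \<in> seqs (carrier G)" "T \<in> seqs (carrier G)"
    and "g \<in> prods G S" "h \<in> prods G T" "QB #>\<^bsub>QF\<^esub> vec S = QB #>\<^bsub>QF\<^esub> vec T"
  shows "G' #> g = G' #> h"
  using assms(2-) rcos_vec_eq_iff[OF assms(1-3)] prod_coset_eq[OF assms(2,4)] prod_coset_eq[OF assms(3,5)]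
  by simp

lemma carrier_QF_Mod_QB:
  assumes fin: "finite (carrier G)" and "C \<in> carrier (QF Mod QB)"
  shows "\<exists>S\<in>seqs (carrier G). C = QB #>\<^bsub>QF\<^esub> vec S"
proof -
  interpret QF: comm_group QF
    by (rule comm_group_QF)
  obtain x where x: "x \<in> carrier QF" "C = QB #>\<^bsub>QF\<^esub> x"
    using assms(2) by (auto simp: carrier_FactGroup)
  then obtain A B where AB: "A \<in> seqs (carrier G)" "B \<in> seqs (carrier G)" "x = (\<lambda>g. vec A g - vec B g)"
    by (auto simp: mem_qgrp_iff)
  \<comment> \<open>completing \<open>B\<close> to a product-one sequence \<open>B + V\<close> turns \<open>x\<close> into \<open>vec (A + V)\<close> modulo \<open>QB\<close>\<close>
  obtain V where V: "V \<in> seqs (carrier G)" "B + V \<in> zss G (carrier G)"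
    using ex_zss_complement[OF fin AB(2)] by blast
  have "x \<otimes>\<^bsub>QF\<^esub> inv\<^bsub>QF\<^esub> vec (A + V) = (\<lambda>g. - vec (B + V) g)"
    using AB V(1) inv_QF_vec[of "A + V"] by (simp add: vec_add)
  moreover have "(\<lambda>g. - vec (B + V) g) \<in> QB"
    using V(2) add_submonoid.qgrp_uminus[OF add_submonoid_vec_zss]
      add_submonoid.subset_qgrp[OF add_submonoid_vec_zss] by blast
  ultimately have "QB #>\<^bsub>QF\<^esub> x = QB #>\<^bsub>QF\<^esub> vec (A + V)"
    using QF.rcos_eq_iff_mult_inv_mem[OF subgroup_QB x(1) vec_in_QF] AB(1) V(1) by simp
  then show ?thesis
    using x(2) AB(1) V(1) by (intro bexI[of _ "A + V"]) simp_all
qed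

lemma Phi_rcos_vec:
  assumes fin: "finite (carrier G)" and S: "S \<in> seqs (carrier G)"
  shows "Phi G (QB #>\<^bsub>QF\<^esub> vec S) = prod_coset S"
proof -
  define P where "P g \<longleftrightarrow> (\<exists>T\<in>seqs (carrier G). QB #>\<^bsub>QF\<^esub> vec S = QB #>\<^bsub>QF\<^esub> vec T \<and> g \<in> prods G T)" for g
  obtain s where "s \<in> prods G S"
    using ex_mem_prods by blast
  then have "P s"
    using S by (auto simp: P_def)
  then obtain T where T: "T \<in> seqs (carrier G)" "QB #>\<^bsub>QF\<^esub> vec S = QB #>\<^bsub>QF\<^esub> vec T"
    "(SOME g. P g) \<in> prods G T"
    using someI[of P] unfolding P_def by blast
  then have "G' #> (SOME g. P g) = prod_coset S"
    using prod_coset_eq rcos_vec_eq_iff[OF fin S] by simp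
  then show ?thesis
    by (simp add: Phi_def P_def)
qed

lemma Phi_iso:
  assumes fin: "finite (carrier G)"
  shows "Phi G \<in> iso (QF Mod QB) (G Mod G')"
proof -
  interpret N: normal QB QF
    by (rule comm_group.subgroup_imp_normal[OF comm_group_QF subgroup_QB])
  have Phi_closed: "Phi G C \<in> carrier (G Mod G')" if "C \<in> carrier (QF Mod QB)" for C
    using carrier_QF_Mod_QB[OF fin that] Phi_rcos_vec[OF fin] prod_coset_closed by auto
  have "Phi G \<in> hom (QF Mod QB) (G Mod G')"
  proof (rule homI)
    fix C D
    assume "C \<in> carrier (QF Mod QB)" "D \<in> carrier (QF Mod QB)"
    then obtain S T where S: "S \<in> seqs (carrier G)" "C = QB #>\<^bsub>QF\<^esub> vec S"
      and T: "T \<in> seqs (carrier G)" "D = QB #>\<^bsub>QF\<^esub> vec T"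
      using carrier_QF_Mod_QB[OF fin] by metis
    have "C \<otimes>\<^bsub>QF Mod QB\<^esub> D = QB #>\<^bsub>QF\<^esub> vec (S + T)"
      using N.rcos_sum[OF vec_in_QF[OF S(1)] vec_in_QF[OF T(1)]] S(2) T(2) by (simp add: vec_add)
    then show "Phi G (C \<otimes>\<^bsub>QF Mod QB\<^esub> D) = Phi G C \<otimes>\<^bsub>G Mod G'\<^esub> Phi G D"
      using Phi_rcos_vec[OF fin] prod_coset_add S T by simp
  qed (rule Phi_closed)
  moreover have "inj_on (Phi G) (carrier (QF Mod QB))"
  proof (rule inj_onI)
    fix C D
    assume "C \<in> carrier (QF Mod QB)" "D \<in> carrier (QF Mod QB)" "Phi G C = Phi G D"
    then show "C = D"
      using carrier_QF_Mod_QB[OF fin] Phi_rcos_vec[OF fin] rcos_vec_eq_iff[OF fin] by metis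
  qed
  moreover have "Phi G ` carrier (QF Mod QB) = carrier (G Mod G')"
  proof
    show "Phi G ` carrier (QF Mod QB) \<subseteq> carrier (G Mod G')"
      using Phi_closed by blast
    show "carrier (G Mod G') \<subseteq> Phi G ` carrier (QF Mod QB)"
    proof
      fix R
      assume "R \<in> carrier (G Mod G')"
      then obtain g where g: "g \<in> carrier G" "R = G' #> g"
        by (auto simp: carrier_FactGroup)
      then have "R = Phi G (QB #>\<^bsub>QF\<^esub> vec {#g#})"
        using Phi_rcos_vec[OF fin] prod_coset_eq list_prod_mem_prods[of "[g]"] by simp
      moreover have "QB #>\<^bsub>QF\<^esub> vec {#g#} \<in> carrier (QF Mod QB)"
        using vec_in_QF g(1) by (auto simp: carrier_FactGroup)
      ultimately show "R \<in> Phi G ` carrier (QF Mod QB)"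
        by blast
    qed
  qed
  ultimately show ?thesis
    by (simp add: iso_def bij_betw_def)
qed

lemma prod_coset_H_equiv:
  assumes fin: "finite (carrier G)" and y: "y \<in> seqs (carrier G)" and y': "y' \<in> seqs (carrier G)"
    and equiv: "H_equiv (zss G (carrier G)) (msmon (seqs (carrier G))) y y'"
  shows "prod_coset y = prod_coset y'"
proof -
  interpret Q: group "G Mod G'"
    by (rule derived_quot_is_group)
  obtain V where V: "V \<in> seqs (carrier G)" "y + V \<in> zss G (carrier G)"
    using ex_zss_complement[OF fin y] by blast
  then have "y' + V \<in> zss G (carrier G)"
    using equiv by (auto simp: H_equiv_def)
  then have "prod_coset y \<otimes>\<^bsub>G Mod G'\<^esub> prod_coset V = prod_coset y' \<otimes>\<^bsub>G Mod G'\<^esub> prod_coset V"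
    using V y y' prod_coset_add prod_coset_zss by metis
  then show ?thesis
    using Q.r_cancel prod_coset_closed V(1) y y' by blast
qed

lemma class_semigroup_epimorphism:
  assumes fin: "finite (carrier G)"
  defines "\<psi> \<equiv> \<lambda>A. prod_coset (SOME a. a \<in> A)"
  shows "\<psi> \<in> hom (class_semigroup (zss G (carrier G)) (msmon (seqs (carrier G)))) (G Mod G')"
    and "\<psi> ` carrier (class_semigroup (zss G (carrier G)) (msmon (seqs (carrier G)))) = carrier (G Mod G')"
proof -
  let ?H = "H_class (zss G (carrier G)) (msmon (seqs (carrier G)))"
  have some_class: "(SOME a. a \<in> ?H y) \<in> seqs (carrier G) \<and>
      H_equiv (zss G (carrier G)) (msmon (seqs (carrier G))) y (SOME a. a \<in> ?H y)"
    if "y \<in> seqs (carrier G)" for y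
  proof -
    have "(SOME a. a \<in> ?H y) \<in> ?H y"
      by (rule someI[of _ y]) (simp add: self_in_H_class that)
    then show ?thesis
      by (simp add: H_class_def)
  qed
  have \<psi>_class: "\<psi> (?H y) = prod_coset y" if "y \<in> seqs (carrier G)" for y
    using prod_coset_H_equiv[OF fin that conjunct1[OF some_class[OF that]] conjunct2[OF some_class[OF that]]]
    by (simp add: \<psi>_def)
  have carrier: "carrier (class_semigroup (zss G (carrier G)) (msmon (seqs (carrier G)))) = ?H ` seqs (carrier G)"
    by (simp add: class_semigroup_def)
  show "\<psi> \<in> hom (class_semigroup (zss G (carrier G)) (msmon (seqs (carrier G)))) (G Mod G')"
  proof (rule homI)
    fix A B
    assume "A \<in> carrier (class_semigroup (zss G (carrier G)) (msmon (seqs (carrier G))))"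
      "B \<in> carrier (class_semigroup (zss G (carrier G)) (msmon (seqs (carrier G))))"
    then obtain y z where y: "y \<in> seqs (carrier G)" "A = ?H y" and z: "z \<in> seqs (carrier G)" "B = ?H z"
      unfolding carrier by blast
    define a b where "a = (SOME a. a \<in> A)" and "b = (SOME b. b \<in> B)"
    have ab: "a \<in> seqs (carrier G)" "b \<in> seqs (carrier G)"
      using some_class y z by (simp_all add: a_def b_def)
    have "A \<otimes>\<^bsub>class_semigroup (zss G (carrier G)) (msmon (seqs (carrier G)))\<^esub> B = ?H (a + b)"
      by (simp add: class_semigroup_def a_def b_def)
    then show "\<psi> (A \<otimes>\<^bsub>class_semigroup (zss G (carrier G)) (msmon (seqs (carrier G)))\<^esub> B) =
        \<psi> A \<otimes>\<^bsub>G Mod G'\<^esub> \<psi> B"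
      using \<psi>_class ab prod_coset_add by (simp add: \<psi>_def a_def b_def)
  qed (use carrier \<psi>_class prod_coset_closed in auto)
  show "\<psi> ` carrier (class_semigroup (zss G (carrier G)) (msmon (seqs (carrier G)))) = carrier (G Mod G')"
  proof
    show "\<psi> ` carrier (class_semigroup (zss G (carrier G)) (msmon (seqs (carrier G)))) \<subseteq> carrier (G Mod G')"
      using carrier \<psi>_class prod_coset_closed by auto
    show "carrier (G Mod G') \<subseteq> \<psi> ` carrier (class_semigroup (zss G (carrier G)) (msmon (seqs (carrier G))))"
    proof
      fix R
      assume "R \<in> carrier (G Mod G')"
      then obtain g where g: "g \<in> carrier G" "R = G' #> g"
        by (auto simp: carrier_FactGroup)
      then have "R = \<psi> (?H {#g#})"
        using \<psi>_class prod_coset_eq list_prod_mem_prods[of "[g]"] by simp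
      then show "R \<in> \<psi> ` carrier (class_semigroup (zss G (carrier G)) (msmon (seqs (carrier G))))"
        using g(1) carrier by auto
    qed
  qed
qed

end

theorem proposition3p5:
  fixes G :: "('a, 'b) monoid_scheme"
  assumes "group G" and "finite (carrier G)" and "card (carrier G) \<ge> 3"
  shows
    "(\<forall>G0. G0 \<subseteq> carrier G \<longrightarrow>
        cofinal (zss G G0) (msmon (seqs G0)) \<and> C_monoid (msmon (zss G G0)))
   \<and> (\<forall>g\<in>carrier G. {count S g | S. S \<in> zss G (carrier G)} = (UNIV :: nat set))
   \<and> divisor_theory (vmon (cic (vec ` zss G (carrier G)))) (vmon (vec ` seqs (carrier G))) id
   \<and> qgrp (cic (vec ` zss G (carrier G))) = qgrp (vec ` zss G (carrier G))
   \<and> (let QF = vmon (qgrp (vec ` seqs (carrier G)));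
          QB = qgrp (vec ` zss G (carrier G));
          G' = derived G (carrier G)
      in (\<forall>C\<in>carrier (QF Mod QB). \<exists>S\<in>seqs (carrier G). C = QB #>\<^bsub>QF\<^esub> vec S)
       \<and> (\<forall>S\<in>seqs (carrier G). \<forall>T\<in>seqs (carrier G). \<forall>g\<in>prods G S. \<forall>h\<in>prods G T.
            QB #>\<^bsub>QF\<^esub> vec S = QB #>\<^bsub>QF\<^esub> vec T \<longrightarrow> G' #>\<^bsub>G\<^esub> g = G' #>\<^bsub>G\<^esub> h)
       \<and> group (QF Mod QB)
       \<and> Phi G \<in> iso (QF Mod QB) (G Mod G'))
   \<and> (\<exists>\<psi>. \<psi> \<in> hom (class_semigroup (zss G (carrier G)) (msmon (seqs (carrier G))))
                    (G Mod derived G (carrier G))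
         \<and> \<psi> ` carrier (class_semigroup (zss G (carrier G)) (msmon (seqs (carrier G))))
             = carrier (G Mod derived G (carrier G)))"
proof -
  interpret group G
    by (rule assms(1))
  have fin: "finite (carrier G)" and card: "3 \<le> card (carrier G)"
    using assms(2,3) by simp_all
  show ?thesis
    unfolding Let_def
  proof (intro conjI allI impI ballI)
    fix G0
    assume "G0 \<subseteq> carrier G"
    then show "cofinal (zss G G0) (msmon (seqs G0))" "C_monoid (msmon (zss G G0))"
      using cofinal_zss[OF fin] C_monoid_zss[OF fin] by blast+
  next
    fix C
    assume "C \<in> carrier (QF Mod QB)"
    then show "\<exists>S\<in>seqs (carrier G). C = QB #>\<^bsub>QF\<^esub> vec S"
      by (rule carrier_QF_Mod_QB[OF fin])
  next
    fix S T g h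
    assume "S \<in> seqs (carrier G)" "T \<in> seqs (carrier G)" "g \<in> prods G S" "h \<in> prods G T"
      "QB #>\<^bsub>QF\<^esub> vec S = QB #>\<^bsub>QF\<^esub> vec T"
    then show "G' #>\<^bsub>G\<^esub> g = G' #>\<^bsub>G\<^esub> h"
      by (rule derived_coset_eq_if_rcos_vec_eq[OF fin])
  next
    show "\<exists>\<psi>. \<psi> \<in> hom (class_semigroup (zss G (carrier G)) (msmon (seqs (carrier G)))) (G Mod G') \<and>
        \<psi> ` carrier (class_semigroup (zss G (carrier G)) (msmon (seqs (carrier G)))) = carrier (G Mod G')"
      by (rule exI, rule conjI, fact class_semigroup_epimorphism(1)[OF fin], fact class_semigroup_epimorphism(2)[OF fin])
  qed (simp_all add: count_zss_eq_UNIV[OF card] divisor_theory_cic_zss[OF fin card] qgrp_cic_zss[OF fin]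
      group_QF_Mod_QB Phi_iso[OF fin])
qed


end
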